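(* For every $n\ge 1$ and every $\alpha'\in\dot\Delta'$ we have $r_{\alpha'}(\dot{\mathcal S}_n)\subset \dot{\mathcal S}'_{n+1}$ (and, symmetrically, $r_{\alpha}(\dot{\mathcal S}'_n)\subset \dot{\mathcal S}_{n+1}$ for every $\alpha\in\dot\Delta$).
   Context: Let $\tau=(1+\sqrt5)/2$, $\tau'=(1-\sqrt5)/2$. Identify $\mathbb{R}^4$ (standard dot product) with the quaternions. Let $\Delta\subset\mathbb{R}^4$ be the set of 120 vectors consisting of: the 8 vectors obtained from $(\pm1,0,0,0)$ by permuting coordinates; the 16 vectors $\frac12(\pm1,\pm1,\pm1,\pm1)$; and the 96 vectors obtained from $\frac12(0,\pm1,\pm\tau',\pm\tau)$ (all sign choices) by even permutations of the coordinates. Let $\Delta'$ be the image of $\Delta$ under the Galois conjugation $\tau\leftrightarrow\tau'$ applied to each coordinate. Put $K=\Delta\cap\Delta'$, $\dot\Delta=\Delta\setminus K$, $\dot\Delta'=\Delta'\setminus K$. For a unit vector $a$, $r_a(x)=x-2(x\cdot a)a$. Let $\mathbb F_4=\mathbb{Z}[\tau]/2\mathbb{Z}[\tau]$ (elements $\bar0,\bar1,\bar\tau,\bar{\tau'}$) and for $y\in\mathbb{Z}[\tau]^4$ let $\bar y\in\mathbb F_4^4$ be its coordinatewise reduction. Let $\dot A\subset\mathbb F_4^4$ be the 12 vectors obtained from $(\bar0,\bar1,\bar{\tau'},\bar\tau)$ by even permutations of coordinates, and $\dot A'$ the 12 vectors obtained from it by odd permutations. For $n\ge1$, $\dot{\mathcal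 S}_n=\{x\in 2^{-n}\mathbb{Z}[\tau]^4: x\cdot x=1,\ \overline{2^nx}\in\dot A\}$ and $\dot{\mathcal S}'_n=\{x\in 2^{-n}\mathbb{Z}[\tau]^4: x\cdot x=1,\ \overline{2^nx}\in\dot A'\}$. *)

theory Defs
  imports "HOL-Analysis.Analysis" "HOL-Combinatorics.Permutations"
begin

definition tau :: real where "tau = (1 + sqrt 5) / 2"
definition tau' :: real where "tau' = (1 - sqrt 5) / 2"

definition galconj :: "real \<Rightarrow> real" where
  "galconj x = (THE y. \<exists>a b :: rat. x = of_rat a + of_rat b * sqrt 5 \<and> y = of_rat a - of_rat b * sqrt 5)"

definition permvec :: "(4 \<Rightarrow> 4) \<Rightarrow> real^4 \<Rightarrow> real^4" where
  "permvec p v = (\<chi> i. v $ (p i))"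

definition Delta :: "(real^4) set" where
  "Delta =
     {x. \<exists>i s. s \<in> {1, -1} \<and> x = (\<chi> j. if j = i then s else 0)}
   \<union> {x. \<forall>i. x $ i \<in> {1/2, -1/2}}
   \<union> {x. \<exists>p s. p permutes (UNIV :: 4 set) \<and> evenperm p \<and> (\<forall>i. s i \<in> {1::real, -1}) \<and>
          x = permvec p (\<chi> i. s i * (vector [0, 1/2, tau'/2, tau/2] :: real^4) $ i)}"

definition Delta' :: "(real^4) set" where
  "Delta' = (\<lambda>x. \<chi> i. galconj (x $ i)) ` Delta"

definition Kset :: "(real^4) set" where "Kset = Delta \<inter> Delta'"
definition DeltaDot :: "(real^4) set" where "DeltaDot = Delta - Kset"
definition DeltaDot' :: "(real^4) set" where "DeltaDot' = Delta' - Kset"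

definition reflect :: "real^4 \<Rightarrow> real^4 \<Rightarrow> real^4" where
  "reflect a x = x - (2 * (x \<bullet> a)) *\<^sub>R a"

definition Ztau :: "real set" where
  "Ztau = {of_int a + of_int b * tau | a b. True}"

text \<open>Congruence modulo 2 Z[tau]: equality of reductions in F_4 = Z[tau]/2Z[tau].\<close>
definition cong2 :: "real \<Rightarrow> real \<Rightarrow> bool" where
  "cong2 u v \<longleftrightarrow> u \<in> Ztau \<and> v \<in> Ztau \<and> (\<exists>z\<in>Ztau. u - v = 2 * z)"

definition baseA :: "real^4" where "baseA = vector [0, 1, tau', tau]"

text \<open>reduction of y lies in A-dot (even perms) / A-dot' (odd perms)\<close>
definition inAdot :: "real^4 \<Rightarrow> bool" where
  "inAdot y \<longleftrightarrow> (\<exists>p. p permutes (UNIV :: 4 set) \<and> evenperm p \<and>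
       (\<forall>i. cong2 (y $ i) (permvec p baseA $ i)))"
definition inAdot' :: "real^4 \<Rightarrow> bool" where
  "inAdot' y \<longleftrightarrow> (\<exists>p. p permutes (UNIV :: 4 set) \<and> \<not> evenperm p \<and>
       (\<forall>i. cong2 (y $ i) (permvec p baseA $ i)))"

definition Sdot :: "nat \<Rightarrow> (real^4) set" where
  "Sdot n = {x. (\<forall>i. (2::real)^n * x $ i \<in> Ztau) \<and> x \<bullet> x = 1 \<and> inAdot ((2::real)^n *\<^sub>R x)}"
definition Sdot' :: "nat \<Rightarrow> (real^4) set" where
  "Sdot' n = {x. (\<forall>i. (2::real)^n * x $ i \<in> Ztau) \<and> x \<bullet> x = 1 \<and> inAdot' ((2::real)^n *\<^sub>R x)}"

end

theory Submission
  imports Defs "HOL-Library.Product_Plus" "HOL-Computational_Algebra.Primes"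
begin

text \<open>Put \<open>y = 2\<^sup>n x\<close>, so that \<open>2\<^sup>n\<^sup>+\<^sup>1 r\<^sub>a(x) = 2y - (2 y\<cdot>a)(2a)\<close>, and reduce modulo
  \<open>2\<int>[\<tau>]\<close>: the term \<open>2y\<close> vanishes, \<open>2a\<close> is a signed permutation \<open>w\<close> of \<open>b = (0, 1, \<tau>', \<tau>)\<close>
  and \<open>y\<close> reduces to a permutation \<open>p\<close> of \<open>b\<close> of the other parity. Hence \<open>2 y\<cdot>a\<close> reduces to
  \<open>\<Sum>\<^sub>j b\<^sub>j b\<^sub>r\<^sub>(\<^sub>j\<^sub>)\<close> for the odd permutation \<open>r = w p\<^sup>-\<^sup>1\<close>, which is a nonzero element of \<open>\<bbbF>\<^sub>4\<close>
  (a finite check). Multiplying by a nonzero element of \<open>\<bbbF>\<^sub>4\<close> permutes the coordinates of \<open>b\<close>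
  evenly, so \<open>2\<^sup>n\<^sup>+\<^sup>1 r\<^sub>a(x)\<close> reduces to a permutation of \<open>b\<close> of the parity of \<open>w\<close>; and \<open>r\<^sub>a\<close>,
  a reflection in a unit vector, preserves \<open>x\<cdot>x = 1\<close>.\<close>

section \<open>Galois conjugation of \<open>\<rat>(\<surd>5)\<close>\<close>

lemma sqrt5_irrational: "sqrt (5::real) \<notin> \<rat>"
proof
  have prime5: "prime (5::nat)"
    by (simp add: prime_nat_iff' atLeastLessThan_nat_numeral)
  assume "sqrt (5::real) \<in> \<rat>"
  then have "sqrt (real (5::nat)) \<in> \<rat>" by simp
  then obtain m n :: nat
    where n: "n \<noteq> 0" and sqrt_rat: "\<bar>sqrt (real (5::nat))\<bar> = m / n" and "coprime m n"
    by (rule Rats_abs_nat_div_natE)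
  from n and sqrt_rat have "m = \<bar>sqrt (real (5::nat))\<bar> * n" by simp
  then have "real (m\<^sup>2) = (sqrt (real (5::nat)))\<^sup>2 * real (n\<^sup>2)"
    by (auto simp add: power2_eq_square)
  also have "(sqrt (real (5::nat)))\<^sup>2 = real (5::nat)" by simp
  finally have eq: "m\<^sup>2 = 5 * n\<^sup>2" by (metis of_nat_eq_iff of_nat_mult)
  then have "(5::nat) dvd m\<^sup>2" ..
  with prime5 have dvd_m: "5 dvd m" by (rule prime_dvd_power)
  then obtain k where "m = 5 * k" ..
  with eq have "n\<^sup>2 = 5 * k\<^sup>2" by (simp add: power2_eq_square)
  then have "(5::nat) dvd n\<^sup>2" ..
  with prime5 have "5 dvd n" by (rule prime_dvd_power)
  with dvd_m have "5 dvd gcd m n" by (rule gcd_greatest)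
  with \<open>coprime m n\<close> show False by simp
qed

lemma sqrt5_coeffs_unique:
  fixes a b c d :: real
  assumes "a \<in> \<rat>" "b \<in> \<rat>" "c \<in> \<rat>" "d \<in> \<rat>" and eq: "a + b * sqrt 5 = c + d * sqrt 5"
  shows "a = c \<and> b = d"
proof (cases "b = d")
  case True
  then show ?thesis using eq by simp
next
  case False
  then have "sqrt 5 = (c - a) / (b - d)" using eq by (simp add: field_simps)
  also have "\<dots> \<in> \<rat>" using assms by simp
  finally show ?thesis using sqrt5_irrational by simp
qed

lemma galconj_eq:
  assumes "a \<in> \<rat>" "b \<in> \<rat>"
  shows "galconj (a + b * sqrt 5) = a - b * sqrt 5"
  unfolding galconj_def
proof (rule the_equality)
  obtain a' b' where "a = of_rat a'" "b = of_rat b'" using assms by (auto elim!: Rats_cases)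
  then show "\<exists>a' b'. a + b * sqrt 5 = of_rat a' + of_rat b' * sqrt 5 \<and>
      a - b * sqrt 5 = of_rat a' - of_rat b' * sqrt 5" by blast
next
  fix y
  assume "\<exists>a' b'. a + b * sqrt 5 = of_rat a' + of_rat b' * sqrt 5 \<and> y = of_rat a' - of_rat b' * sqrt 5"
  then obtain a' b' where coeffs: "a + b * sqrt 5 = of_rat a' + of_rat b' * sqrt 5"
    and y: "y = of_rat a' - of_rat b' * sqrt 5" by blast
  have "a = of_rat a' \<and> b = of_rat b'"
    using sqrt5_coeffs_unique[OF assms _ _ coeffs] by simp
  with y show "y = a - b * sqrt 5" by simp
qed

lemma galconj_Rats: "r \<in> \<rat> \<Longrightarrow> galconj r = r"
  using galconj_eq[of r 0] by simp

lemma vector_4_nth: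
  "(vector [x, y, z, w] :: 'a::zero ^ 4) $ 1 = x"
  "(vector [x, y, z, w] :: 'a::zero ^ 4) $ 2 = y"
  "(vector [x, y, z, w] :: 'a::zero ^ 4) $ 3 = z"
  "(vector [x, y, z, w] :: 'a::zero ^ 4) $ 4 = w"
  by (simp_all add: vector_def)

lemma galconj_half_baseA:
  assumes "s \<in> {1, -1}"
  shows "galconj (s * (baseA $ k / 2)) = s * (baseA $ Transposition.transpose 3 4 k / 2)"
proof -
  have "\<exists>c d. c \<in> \<rat> \<and> d \<in> \<rat> \<and>
      baseA $ k / 2 = c + d * sqrt 5 \<and> baseA $ Transposition.transpose 3 4 k / 2 = c - d * sqrt 5"
  proof -
    consider "k = 1" | "k = 2" | "k = 3" | "k = 4" using exhaust_4 by blast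
    then show ?thesis
    proof cases
      case 1 show ?thesis by (rule exI[of _ 0], rule exI[of _ 0]) (simp add: 1 baseA_def vector_4_nth)
    next
      case 2 show ?thesis by (rule exI[of _ "1/2"], rule exI[of _ 0]) (simp add: 2 baseA_def vector_4_nth)
    next
      case 3 show ?thesis by (rule exI[of _ "1/4"], rule exI[of _ "-1/4"])
          (simp add: 3 baseA_def vector_4_nth tau_def tau'_def field_simps)
    next
      case 4 show ?thesis by (rule exI[of _ "1/4"], rule exI[of _ "1/4"])
          (simp add: 4 baseA_def vector_4_nth tau_def tau'_def field_simps)
    qed
  qed
  then obtain c d where cd: "c \<in> \<rat>" "d \<in> \<rat>" and k: "baseA $ k / 2 = c + d * sqrt 5"
    and tk: "baseA $ Transposition.transpose 3 4 k / 2 = c - d * sqrt 5" by blast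
  have s: "s \<in> \<rat>" using assms by auto
  have "galconj (s * (baseA $ k / 2)) = galconj (s * c + s * d * sqrt 5)"
    by (simp add: k algebra_simps)
  also have "\<dots> = s * c - s * d * sqrt 5" using cd s by (intro galconj_eq) simp_all
  finally show ?thesis by (simp add: tk algebra_simps)
qed

section \<open>The roots \<open>\<Delta>\<close> and \<open>\<Delta>'\<close>\<close>

definition galconj_vec :: "real^4 \<Rightarrow> real^4" where
  "galconj_vec x = (\<chi> i. galconj (x $ i))"

lemma Delta'_eq: "Delta' = galconj_vec ` Delta"
  unfolding Delta'_def galconj_vec_def ..

lemma galconj_vec_Rats: "(\<And>i. x $ i \<in> \<rat>) \<Longrightarrow> galconj_vec x = x"
  by (simp add: galconj_vec_def galconj_Rats vec_eq_iff)

lemma Delta_cases: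
  assumes "d \<in> Delta"
  obtains (rational) "\<And>i. d $ i \<in> \<rat>"
  | (half_baseA) w \<sigma> where "w permutes UNIV" "evenperm w" "\<And>i. \<sigma> i \<in> {1, -1}"
      "\<And>i. d $ i = \<sigma> i * (baseA $ w i / 2)"
proof -
  have half: "(vector [0, 1/2, tau'/2, tau/2] :: real^4) $ k = baseA $ k / 2" for k
    using exhaust_4[of k] by (auto simp: baseA_def vector_4_nth)
  from assms consider (unit) i s where "s \<in> {1, -1}" "d = (\<chi> j. if j = i then s else 0)"
    | (halves) "\<forall>i. d $ i \<in> {1/2, -1/2}"
    | (third) p s where "p permutes UNIV" "evenperm p" "\<forall>i. s i \<in> {1::real, -1}"
        "d = permvec p (\<chi> i. s i * (vector [0, 1/2, tau'/2, tau/2] :: real^4) $ i)"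
    unfolding Delta_def by blast
  then show thesis
  proof cases
    case unit then show thesis by (intro rational) auto
  next
    case halves
    have "(1/2::real) \<in> \<rat>" "(-1/2::real) \<in> \<rat>" by simp_all
    then have "d $ i \<in> \<rat>" for i using halves[rule_format, of i] by (metis insertE empty_iff)
    then show thesis by (rule rational)
  next
    case (third p s)
    then show thesis by (intro half_baseA[of p "s \<circ> p"]) (simp_all add: permvec_def half)
  qed
qed

lemma DeltaDot_coords:
  assumes "a \<in> DeltaDot"
  obtains w \<sigma> where "w permutes UNIV" "evenperm w" "\<And>i. \<sigma> i \<in> {1, -1}"
    "\<And>i. a $ i = \<sigma> i * (baseA $ w i / 2)"
proof -
  have "a \<in> Delta" "a \<notin> Delta'" using assms unfolding DeltaDot_def Kset_def by auto
  from \<open>a \<in> Delta\<close> show thesis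
  proof (cases rule: Delta_cases)
    case rational
    then have "a \<in> Delta'" using \<open>a \<in> Delta\<close> galconj_vec_Rats unfolding Delta'_eq by force
    with \<open>a \<notin> Delta'\<close> show thesis ..
  qed (rule that)
qed

lemma DeltaDot'_coords:
  assumes "a \<in> DeltaDot'"
  obtains w \<sigma> where "w permutes UNIV" "\<not> evenperm w" "\<And>i. \<sigma> i \<in> {1, -1}"
    "\<And>i. a $ i = \<sigma> i * (baseA $ w i / 2)"
proof -
  have "a \<in> Delta'" "a \<notin> Delta" using assms unfolding DeltaDot'_def Kset_def by auto
  then obtain d where "d \<in> Delta" and a: "a = galconj_vec d" unfolding Delta'_eq by blast
  from \<open>d \<in> Delta\<close> show thesis
  proof (cases rule: Delta_cases)
    case rational
    with \<open>d \<in> Delta\<close> \<open>a \<notin> Delta\<close> show thesis by (simp add: a galconj_vec_Rats)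
  next
    case (half_baseA w \<sigma>)
    let ?t = "Transposition.transpose (3::4) 4"
    show thesis
    proof (rule that)
      show "?t \<circ> w permutes UNIV"
        by (intro permutes_compose half_baseA(1) permutes_swap_id) simp_all
      show "\<not> evenperm (?t \<circ> w)"
        using half_baseA(1,2)
        by (simp add: evenperm_comp permutation_swap_id evenperm_swap permutes_imp_permutation)
      show "a $ i = \<sigma> i * (baseA $ (?t \<circ> w) i / 2)" for i
        unfolding a galconj_vec_def vec_lambda_beta half_baseA(4) o_apply
        using half_baseA(3) by (rule galconj_half_baseA)
    qed (use half_baseA in simp)
  qed
qed

section \<open>\<open>\<int>[\<tau>]\<close> as pairs of integers\<close>

definition ztau :: "int \<times> int \<Rightarrow> real" where
  "ztau c = of_int (fst c) + of_int (snd c) * tau"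

text \<open>The product in \<open>\<int>[\<tau>]\<close>, using \<open>\<tau>\<^sup>2 = \<tau> + 1\<close>.\<close>
definition zmult :: "int \<times> int \<Rightarrow> int \<times> int \<Rightarrow> int \<times> int" where
  "zmult c d = (fst c * fst d + snd c * snd d, fst c * snd d + snd c * fst d + snd c * snd d)"

definition zcong2 :: "int \<times> int \<Rightarrow> int \<times> int \<Rightarrow> bool" where
  "zcong2 c d \<longleftrightarrow> even (fst c - fst d) \<and> even (snd c - snd d)"

lemma tau_squared: "tau * tau = tau + 1"
  unfolding tau_def by (simp add: field_simps)

lemma ztau_zmult: "ztau c * ztau d = ztau (zmult c d)"
proof -
  have "ztau c * ztau d = of_int (fst c * fst d)
      + of_int (fst c * snd d + snd c * fst d) * tau + of_int (snd c * snd d) * (tau * tau)"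
    unfolding ztau_def by (simp add: algebra_simps)
  then show ?thesis unfolding tau_squared ztau_def zmult_def by (simp add: algebra_simps)
qed

lemma ztau_zero: "ztau 0 = 0"
  and ztau_add: "ztau (c + d) = ztau c + ztau d"
  and ztau_diff: "ztau (c - d) = ztau c - ztau d"
  and ztau_uminus: "ztau (- c) = - ztau c"
  unfolding ztau_def by (simp_all add: algebra_simps)

lemma ztau_sum: "ztau (sum f A) = (\<Sum>i\<in>A. ztau (f i))"
  by (induct A rule: infinite_finite_induct) (simp_all add: ztau_zero ztau_add)

lemma Ztau_eq_range_ztau: "Ztau = range ztau"
proof (intro set_eqI iffI)
  fix x
  assume "x \<in> Ztau"
  then obtain a b where "x = ztau (a, b)" unfolding Ztau_def ztau_def by auto
  then show "x \<in> range ztau" by blast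
next
  fix x
  assume "x \<in> range ztau"
  then show "x \<in> Ztau" unfolding Ztau_def ztau_def by blast
qed

lemma zcong2_iff: "zcong2 c d \<longleftrightarrow> (\<exists>e. c = d + e + e)"
proof
  assume "zcong2 c d"
  then obtain k1 k2 where "fst c - fst d = 2 * k1" "snd c - snd d = 2 * k2"
    unfolding zcong2_def by (meson evenE)
  then have "c = d + (k1, k2) + (k1, k2)" by (simp add: prod_eq_iff)
  then show "\<exists>e. c = d + e + e" ..
next
  assume "\<exists>e. c = d + e + e"
  then show "zcong2 c d" unfolding zcong2_def by auto
qed

lemma zcong2_refl: "zcong2 c c"
  and zcong2_trans [trans]: "zcong2 c d \<Longrightarrow> zcong2 d e \<Longrightarrow> zcong2 c e"
  and zcong2_add: "zcong2 c c' \<Longrightarrow> zcong2 d d' \<Longrightarrow> zcong2 (c + d) (c' + d')"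
  and zcong2_uminus: "zcong2 (- c) c"
  and zcong2_double_diff: "zcong2 (c + c - d) d"
  unfolding zcong2_def by simp_all

lemma zcong2_zmult: "zcong2 c c' \<Longrightarrow> zcong2 d d' \<Longrightarrow> zcong2 (zmult c d) (zmult c' d')"
proof -
  assume "zcong2 c c'" "zcong2 d d'"
  then obtain e f where ef: "c = c' + e + e" "d = d' + f + f" unfolding zcong2_iff by blast
  let ?g = "zmult c' f + zmult e d' + zmult e f + zmult e f"
  have "zmult c d = zmult c' d' + ?g + ?g" unfolding ef
    by (simp add: zmult_def prod_eq_iff algebra_simps)
  then show ?thesis unfolding zcong2_iff by blast
qed

lemma zcong2_sum: "(\<And>i. i \<in> A \<Longrightarrow> zcong2 (f i) (g i)) \<Longrightarrow> zcong2 (sum f A) (sum g A)"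
  by (induct A rule: infinite_finite_induct) (simp_all add: zcong2_refl zcong2_add)

lemma cong2_ztau:
  assumes "zcong2 c d"
  shows "cong2 (ztau c) (ztau d)"
proof -
  obtain e where "c = d + e + e" using assms unfolding zcong2_iff by blast
  then have "ztau c - ztau d = 2 * ztau e" by (simp add: ztau_add)
  then show ?thesis unfolding cong2_def Ztau_eq_range_ztau by blast
qed

lemma cong2_ztauE:
  assumes "cong2 x (ztau d)"
  obtains c where "x = ztau c" "zcong2 c d"
proof -
  obtain e where "x - ztau d = 2 * ztau e"
    using assms unfolding cong2_def Ztau_eq_range_ztau by blast
  then have "x = ztau (d + e + e)" by (simp add: ztau_add)
  then show thesis using that zcong2_iff by blast
qed

section \<open>Arithmetic of \<open>\<bbbF>\<^sub>4\<close> on the coordinates of \<open>(0, 1, \<tau>', \<tau>)\<close>\<close>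

definition baseZ :: "4 \<Rightarrow> int \<times> int" where
  "baseZ k = (if k = 1 then (0, 0) else if k = 2 then (1, 0) else if k = 3 then (1, -1) else (0, 1))"

lemma baseA_eq_ztau_baseZ: "baseA $ k = ztau (baseZ k)"
proof -
  have "tau' = 1 - tau" unfolding tau_def tau'_def by (simp add: field_simps)
  then show ?thesis
    using exhaust_4[of k] by (auto simp: baseA_def baseZ_def ztau_def vector_4_nth)
qed

definition base_pairing :: "(4 \<Rightarrow> 4) \<Rightarrow> int \<times> int" where
  "base_pairing r = (\<Sum>j\<in>UNIV. zmult (baseZ j) (baseZ (r j)))"

text \<open>Three transpositions reduce \<open>r\<close> to the identity; the right-hand side records which
  of them are trivial.\<close>
lemma evenperm_4_iff:
  fixes r :: "4 \<Rightarrow> 4"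
  assumes r: "r permutes UNIV"
  shows "evenperm r \<longleftrightarrow>
    (let b = Transposition.transpose 1 (r 1) (r 2); c = Transposition.transpose 1 (r 1) (r 3)
     in (1 = r 1) = ((2 = b) = (3 = Transposition.transpose 2 b c)))"
proof -
  define r1 where "r1 = Transposition.transpose 1 (r 1) \<circ> r"
  define r2 where "r2 = Transposition.transpose 2 (r1 2) \<circ> r1"
  define r3 where "r3 = Transposition.transpose 3 (r2 3) \<circ> r2"
  have p1: "r1 permutes UNIV" unfolding r1_def by (intro permutes_compose r permutes_swap_id) auto
  have p2: "r2 permutes UNIV" unfolding r2_def by (intro permutes_compose p1 permutes_swap_id) auto
  have p3: "r3 permutes UNIV" unfolding r3_def by (intro permutes_compose p2 permutes_swap_id) auto
  have perm: "permutation r" "permutation r1" "permutation r2"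
    using r p1 p2 by (auto intro: permutes_imp_permutation)
  have e1: "evenperm r1 = ((1 = r 1) = evenperm r)" unfolding r1_def
    by (simp add: evenperm_comp perm permutation_swap_id evenperm_swap)
  have e2: "evenperm r2 = ((2 = r1 2) = evenperm r1)" unfolding r2_def
    by (simp add: evenperm_comp perm permutation_swap_id evenperm_swap)
  have e3: "evenperm r3 = ((3 = r2 3) = evenperm r2)" unfolding r3_def
    by (simp add: evenperm_comp perm permutation_swap_id evenperm_swap)
  have inj: "inj r1" "inj r2" "inj r3" using p1 p2 p3 permutes_inj by auto
  have distinct: "(1::4) \<noteq> 2" "(1::4) \<noteq> 3" "(2::4) \<noteq> 3" "(1::4) \<noteq> 4" "(2::4) \<noteq> 4"
    "(3::4) \<noteq> 4" by simp_all
  have "r1 1 = 1" unfolding r1_def by simp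
  moreover have "r1 2 \<noteq> 1" using inj(1) \<open>r1 1 = 1\<close> by (metis injD distinct)
  ultimately have r2_12: "r2 1 = 1" "r2 2 = 2" unfolding r2_def by (simp_all add: transpose_def)
  then have "r2 3 \<noteq> 1" "r2 3 \<noteq> 2" using inj(2) by (metis injD distinct)+
  then have r3_123: "r3 1 = 1" "r3 2 = 2" "r3 3 = 3"
    unfolding r3_def using r2_12 by (auto simp add: transpose_def)
  then have "r3 4 \<noteq> 1" "r3 4 \<noteq> 2" "r3 4 \<noteq> 3" using inj(3) by (metis injD distinct)+
  then have "r3 = id" using r3_123 exhaust_4 by (auto simp: fun_eq_iff forall_4)
  then have "evenperm r3" by simp
  with e1 e2 e3 have "evenperm r \<longleftrightarrow> (1 = r 1) = ((2 = r1 2) = (3 = r2 3))" by blast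
  moreover have "r1 2 = Transposition.transpose 1 (r 1) (r 2)"
    "r2 3 = Transposition.transpose 2 (Transposition.transpose 1 (r 1) (r 2))
              (Transposition.transpose 1 (r 1) (r 3))"
    unfolding r1_def r2_def by simp_all
  ultimately show ?thesis unfolding Let_def by simp
qed

lemma base_pairing_odd_perm:
  assumes r: "r permutes UNIV" and odd: "\<not> evenperm r"
  shows "\<not> zcong2 (base_pairing r) 0"
proof -
  have brute_force: "\<forall>a b c d :: 4.
     a \<noteq> b \<longrightarrow> a \<noteq> c \<longrightarrow> a \<noteq> d \<longrightarrow> b \<noteq> c \<longrightarrow> b \<noteq> d \<longrightarrow> c \<noteq> d \<longrightarrow>
     \<not> (let b' = Transposition.transpose 1 a b; c' = Transposition.transpose 1 a c
        in (1 = a) = ((2 = b') = (3 = Transposition.transpose 2 b' c'))) \<longrightarrow>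
     \<not> zcong2 (zmult (baseZ 1) (baseZ a) + zmult (baseZ 2) (baseZ b)
        + zmult (baseZ 3) (baseZ c) + zmult (baseZ 4) (baseZ d)) 0"
    unfolding forall_4 by (simp add: baseZ_def zmult_def zcong2_def)
  have "inj r" using r permutes_inj by auto
  then have "r i \<noteq> r j" if "i \<noteq> j" for i j using that by (meson injD)
  then show ?thesis
    using brute_force odd unfolding evenperm_4_iff[OF r] base_pairing_def sum_4 by simp
qed

text \<open>Multiplication by \<open>\<tau>\<close> fixes \<open>0\<close> and cycles \<open>1 \<mapsto> \<tau> \<mapsto> \<tau>' \<mapsto> 1\<close> in \<open>\<bbbF>\<^sub>4\<close>,
  multiplication by \<open>\<tau>'\<close> cycles them the other way.\<close>
lemma zmult_baseZ_even_perm: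
  assumes "\<not> zcong2 c 0"
  obtains s where "s permutes UNIV" "evenperm s" "\<And>k. zcong2 (zmult c (baseZ k)) (baseZ (s k))"
proof -
  obtain a b where c: "c = (a, b)" by (cases c)
  have transp: "Transposition.transpose x y permutes (UNIV :: 4 set)" for x y
    by (rule permutes_swap_id) auto
  have even_transp_comp:
    "evenperm (Transposition.transpose (x::4) y \<circ> Transposition.transpose z w) \<longleftrightarrow> (x = y) = (z = w)"
    for x y z w by (simp add: evenperm_comp permutation_swap_id evenperm_swap)
  have "\<exists>s. s permutes UNIV \<and> evenperm s \<and> (\<forall>k. zcong2 (zmult c (baseZ k)) (baseZ (s k)))"
  proof -
    consider "odd a" "even b" | "even a" "odd b" | "odd a" "odd b"
      using assms c by (auto simp: zcong2_def)
    then show ?thesis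
    proof cases
      case 1
      then show ?thesis
        by (intro exI[of _ id] conjI permutes_id)
          (simp_all add: c baseZ_def zmult_def zcong2_def forall_4)
    next
      case 2
      then show ?thesis
        by (intro exI[of _ "Transposition.transpose 3 4 \<circ> Transposition.transpose 2 3"] conjI
            permutes_compose transp)
          (simp_all add: even_transp_comp c baseZ_def zmult_def zcong2_def forall_4)
    next
      case 3
      then show ?thesis
        by (intro exI[of _ "Transposition.transpose 2 3 \<circ> Transposition.transpose 3 4"] conjI
            permutes_compose transp)
          (simp_all add: even_transp_comp c baseZ_def zmult_def zcong2_def forall_4)
    qed
  qed
  with that show thesis by blast
qed

section \<open>Reflections modulo 2\<close>

lemma zcong2_reflection:
  fixes Y A :: "4 \<Rightarrow> int \<times> int"
  assumes p: "p permutes UNIV" and w: "w permutes UNIV" and parity: "evenperm w \<noteq> evenperm p"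
    and Y: "\<And>i. zcong2 (Y i) (baseZ (p i))" and A: "\<And>i. zcong2 (A i) (baseZ (w i))"
  obtains p' where "p' permutes UNIV" "evenperm p' = evenperm w"
    "\<And>i. zcong2 (Y i + Y i - zmult (\<Sum>j\<in>UNIV. zmult (Y j) (A j)) (A i)) (baseZ (p' i))"
proof -
  let ?T = "\<Sum>j\<in>UNIV. zmult (Y j) (A j)"
  define r where "r = w \<circ> inv p"
  have inv_p: "inv p permutes UNIV" using p by (rule permutes_inv)
  have r: "r permutes UNIV" unfolding r_def using inv_p w by (rule permutes_compose)
  have "\<not> evenperm r" unfolding r_def using parity p w inv_p
    by (simp add: evenperm_comp evenperm_inv permutes_imp_permutation)
  have "base_pairing r = (\<Sum>j\<in>UNIV. zmult (baseZ (p j)) (baseZ (r (p j))))"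
    unfolding base_pairing_def using sum.permute[OF p] by (simp add: comp_def)
  also have "\<dots> = (\<Sum>j\<in>UNIV. zmult (baseZ (p j)) (baseZ (w j)))"
    unfolding r_def by (simp add: permutes_inverses(2)[OF p])
  finally have T: "zcong2 ?T (base_pairing r)"
    by (simp only:) (intro zcong2_sum zcong2_zmult Y A)
  obtain s where s: "s permutes UNIV" "evenperm s"
    and mult_s: "\<And>k. zcong2 (zmult (base_pairing r) (baseZ k)) (baseZ (s k))"
    using zmult_baseZ_even_perm[OF base_pairing_odd_perm[OF r \<open>\<not> evenperm r\<close>]] by blast
  show thesis
  proof (rule that[of "s \<circ> w"])
    show "s \<circ> w permutes UNIV" using w s(1) by (rule permutes_compose)
    show "evenperm (s \<circ> w) = evenperm w"
      using s w by (simp add: evenperm_comp permutes_imp_permutation)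
    fix i
    have "zcong2 (Y i + Y i - zmult ?T (A i)) (zmult ?T (A i))"
      by (rule zcong2_double_diff)
    also have "zcong2 \<dots> (zmult (base_pairing r) (baseZ (w i)))"
      using T A by (rule zcong2_zmult)
    also have "zcong2 \<dots> (baseZ ((s \<circ> w) i))"
      using mult_s by simp
    finally show "zcong2 (Y i + Y i - zmult ?T (A i)) (baseZ ((s \<circ> w) i))" .
  qed
qed

lemma cong2_reflection:
  fixes y a :: "real^4"
  assumes w: "w permutes UNIV" and \<sigma>: "\<And>i. \<sigma> i \<in> {1, -1}" and a: "\<And>i. a $ i = \<sigma> i * (baseA $ w i / 2)"
    and p: "p permutes UNIV" and parity: "evenperm w \<noteq> evenperm p"
    and y: "\<And>i. cong2 (y $ i) (baseA $ p i)"
  obtains p' where "p' permutes UNIV" "evenperm p' = evenperm w"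
    "\<And>i. cong2 (2 * y $ i - 2 * (y \<bullet> a) * (2 * a $ i)) (baseA $ p' i)"
proof -
  have "\<forall>i. \<exists>c. y $ i = ztau c \<and> zcong2 c (baseZ (p i))"
    using y unfolding baseA_eq_ztau_baseZ by (metis cong2_ztauE)
  then obtain Y where y_Y: "\<And>i. y $ i = ztau (Y i)" and Y: "\<And>i. zcong2 (Y i) (baseZ (p i))"
    by metis
  define A where "A i = (if \<sigma> i = 1 then baseZ (w i) else - baseZ (w i))" for i
  have a_A: "2 * a $ i = ztau (A i)" for i
    using \<sigma>[of i] by (auto simp: a A_def baseA_eq_ztau_baseZ ztau_uminus)
  have A: "zcong2 (A i) (baseZ (w i))" for i
    by (simp add: A_def zcong2_refl zcong2_uminus)
  let ?T = "\<Sum>j\<in>UNIV. zmult (Y j) (A j)"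
  have "2 * (y \<bullet> a) = (\<Sum>j\<in>UNIV. y $ j * (2 * a $ j))"
    unfolding inner_vec_def inner_real_def by (simp add: sum_distrib_left algebra_simps)
  also have "\<dots> = ztau ?T"
    unfolding y_Y a_A ztau_zmult ztau_sum ..
  finally have y_a: "2 * (y \<bullet> a) = ztau ?T" .
  obtain p' where p': "p' permutes UNIV" "evenperm p' = evenperm w"
    and cong: "\<And>i. zcong2 (Y i + Y i - zmult ?T (A i)) (baseZ (p' i))"
    using zcong2_reflection[OF p w parity Y A] by blast
  show thesis
  proof (rule that[OF p'])
    fix i
    have "2 * y $ i - 2 * (y \<bullet> a) * (2 * a $ i) = ztau (Y i + Y i - zmult ?T (A i))"
      unfolding y_a a_A y_Y ztau_zmult ztau_diff ztau_add by simp
    then show "cong2 (2 * y $ i - 2 * (y \<bullet> a) * (2 * a $ i)) (baseA $ p' i)"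
      unfolding baseA_eq_ztau_baseZ using cong by (simp add: cong2_ztau)
  qed
qed

lemma inner_self_half_baseA:
  fixes a :: "real^4"
  assumes w: "w permutes UNIV" and \<sigma>: "\<And>i. \<sigma> i \<in> {1, -1}" and a: "\<And>i. a $ i = \<sigma> i * (baseA $ w i / 2)"
  shows "a \<bullet> a = 1"
proof -
  have sq: "\<sigma> i * \<sigma> i = 1" for i using \<sigma>[of i] by auto
  have "a \<bullet> a = (\<Sum>i\<in>UNIV. (\<sigma> i * \<sigma> i) * (baseA $ w i)\<^sup>2 / 4)"
    unfolding inner_vec_def inner_real_def by (simp add: a power2_eq_square algebra_simps)
  also have "\<dots> = (\<Sum>i\<in>UNIV. (baseA $ w i)\<^sup>2 / 4)"
    by (simp only: sq mult_1)
  also have "\<dots> = (\<Sum>k\<in>UNIV. (baseA $ k)\<^sup>2) / 4"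
    using sum.permute[OF w, of "\<lambda>k. (baseA $ k)\<^sup>2 / 4"] by (simp add: sum_divide_distrib)
  also have "(\<Sum>k\<in>UNIV. (baseA $ k)\<^sup>2) = 0 + 1 + tau'\<^sup>2 + tau\<^sup>2"
    by (simp add: sum_4 baseA_def vector_4_nth)
  also have "\<dots> = 4"
    unfolding tau_def tau'_def by (simp add: field_simps power2_eq_square)
  finally show ?thesis by simp
qed

lemma inner_reflect_self: "a \<bullet> a = 1 \<Longrightarrow> reflect a x \<bullet> reflect a x = x \<bullet> x"
  unfolding reflect_def by (simp add: inner_diff_left inner_diff_right inner_commute algebra_simps)

definition reduces_to_baseA :: "bool \<Rightarrow> real^4 \<Rightarrow> bool" where
  "reduces_to_baseA e y \<longleftrightarrow>
     (\<exists>p. p permutes UNIV \<and> evenperm p = e \<and> (\<forall>i. cong2 (y $ i) (baseA $ p i)))"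

definition Sdot_parity :: "bool \<Rightarrow> nat \<Rightarrow> (real^4) set" where
  "Sdot_parity e n =
     {x. (\<forall>i. (2::real)^n * x $ i \<in> Ztau) \<and> x \<bullet> x = 1 \<and> reduces_to_baseA e ((2::real)^n *\<^sub>R x)}"

lemma Sdot_eq_Sdot_parity: "Sdot n = Sdot_parity True n"
  and Sdot'_eq_Sdot_parity: "Sdot' n = Sdot_parity False n"
  unfolding Sdot_def Sdot'_def Sdot_parity_def reduces_to_baseA_def inAdot_def inAdot'_def
  by (simp_all add: permvec_def)

lemma reflect_Sdot_parity:
  assumes w: "w permutes UNIV" and \<sigma>: "\<And>i. \<sigma> i \<in> {1, -1}" and a: "\<And>i. a $ i = \<sigma> i * (baseA $ w i / 2)"
  shows "reflect a ` Sdot_parity (\<not> evenperm w) n \<subseteq> Sdot_parity (evenperm w) (n + 1)"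
proof
  fix z
  assume "z \<in> reflect a ` Sdot_parity (\<not> evenperm w) n"
  then obtain x where x: "x \<in> Sdot_parity (\<not> evenperm w) n" and z: "z = reflect a x" by blast
  define y where "y = (2::real)^n *\<^sub>R x"
  obtain p where p: "p permutes UNIV" "evenperm p = (\<not> evenperm w)"
    and y_p: "\<And>i. cong2 (y $ i) (baseA $ p i)"
    using x unfolding Sdot_parity_def reduces_to_baseA_def y_def by blast
  obtain p' where p': "p' permutes UNIV" "evenperm p' = evenperm w"
    and cong: "\<And>i. cong2 (2 * y $ i - 2 * (y \<bullet> a) * (2 * a $ i)) (baseA $ p' i)"
    using cong2_reflection[OF w \<sigma> a p(1) _ y_p] p(2) by auto
  have "((2::real)^(n + 1) *\<^sub>R z) $ i = 2 * y $ i - 2 * (y \<bullet> a) * (2 * a $ i)" for i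
    unfolding z y_def reflect_def by (simp add: algebra_simps)
  then have "reduces_to_baseA (evenperm w) ((2::real)^(n + 1) *\<^sub>R z)"
    unfolding reduces_to_baseA_def using p' cong by metis
  moreover from this have "\<forall>i. (2::real)^(n + 1) * z $ i \<in> Ztau"
    unfolding reduces_to_baseA_def cong2_def by auto
  moreover have "z \<bullet> z = 1"
    using x inner_reflect_self[OF inner_self_half_baseA[OF w \<sigma> a]]
    unfolding z Sdot_parity_def by simp
  ultimately show "z \<in> Sdot_parity (evenperm w) (n + 1)"
    unfolding Sdot_parity_def by blast
qed

theorem mainTheorem2:
  fixes n :: nat
  assumes "n \<ge> 1"
  shows "(\<forall>a'\<in>DeltaDot'. reflect a' ` Sdot n \<subseteq> Sdot' (n + 1)) \<and>
         (\<forall>a\<in>DeltaDot. reflect a ` Sdot' n \<subseteq> Sdot (n + 1))"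
proof (intro conjI ballI)
  fix a'
  assume "a' \<in> DeltaDot'"
  then obtain w \<sigma> where "w permutes UNIV" "\<not> evenperm w" "\<And>i. \<sigma> i \<in> {1, -1}"
    "\<And>i. a' $ i = \<sigma> i * (baseA $ w i / 2)"
    by (rule DeltaDot'_coords) blast
  with reflect_Sdot_parity[of w \<sigma> a' n]
  show "reflect a' ` Sdot n \<subseteq> Sdot' (n + 1)"
    by (simp add: Sdot_eq_Sdot_parity Sdot'_eq_Sdot_parity)
next
  fix a
  assume "a \<in> DeltaDot"
  then obtain w \<sigma> where "w permutes UNIV" "evenperm w" "\<And>i. \<sigma> i \<in> {1, -1}"
    "\<And>i. a $ i = \<sigma> i * (baseA $ w i / 2)"
    by (rule DeltaDot_coords) blast
  with reflect_Sdot_parity[of w \<sigma> a n]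
  show "reflect a ` Sdot' n \<subseteq> Sdot (n + 1)"
    by (simp add: Sdot_eq_Sdot_parity Sdot'_eq_Sdot_parity)
qed

end
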